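(* In the $\ell^2$ linear social choice setting (candidates and voters $\ell^2$-normalized), the pure stable lottery rule satisfies $\mathrm{D}(f_{\mathrm{PSLR}})=O(d)$.
   Context: Setting ($\ell^2$ linear social choice). Fix a dimension $d$. An instance consists of $n$ voters and $m$ candidates, each a vector in $\mathbb{R}^d_{\ge 0}$ with Euclidean norm $1$, with every voter vector in $\mathrm{Cone}(C)$ (nonnegative linear combinations of the candidate vectors $C$). Utility $u_v(c)=v^\top c$; voters report consistent rankings (ties arbitrary); $\mathrm{UW}(c)=\sum_v u_v(c)$. A randomized rule outputs a distribution over $C$ based only on the profile. Distortion on an instance: $\max_c\mathrm{UW}(c)/\mathbb{E}_{c\sim f}[\mathrm{UW}(c)]$; $\mathrm{D}(f)$ is the supremum over instances, as a function of $d$. Stable lottery: for a committee $W\subseteq C$ and $c\in C$, $S_c(W)$ is the set of voters ranking $c$ above every member of $W$; a distribution $\mathcal W$ over committees of size $k$ is a stable lottery if $\mathbb{E}_{W\sim\mathcal W}[|S_c(W)|]\le n/k$ for all $c\in C$ (such lotteries exist for every profile). $f_{\mathrm{PSLR}}$: given a stable lottery $\mathcal W$ over committees of size $2d$, choose each $c\in C$ with probability $\frac1{2d}\Pr_{W\sim\mathcal W}[c\in W]$. *)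

theory Defs
  imports "HOL-Probability.Probability"
begin

text \<open>Vectors in R^d are represented as functions nat => real; only coordinates i < d matter.
  Voters are indexed by {..<n}, candidates by {..<m}.\<close>

definition ip :: "nat \<Rightarrow> (nat \<Rightarrow> real) \<Rightarrow> (nat \<Rightarrow> real) \<Rightarrow> real" where
  "ip d x y = (\<Sum>i<d. x i * y i)"

definition unit_nonneg :: "nat \<Rightarrow> (nat \<Rightarrow> real) \<Rightarrow> bool" where
  "unit_nonneg d x \<longleftrightarrow> (\<forall>i<d. 0 \<le> x i) \<and> (\<Sum>i<d. (x i)\<^sup>2) = 1"

definition in_cone :: "nat \<Rightarrow> nat \<Rightarrow> (nat \<Rightarrow> nat \<Rightarrow> real) \<Rightarrow> (nat \<Rightarrow> real) \<Rightarrow> bool" where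
  "in_cone d m cand x \<longleftrightarrow>
     (\<exists>lam::nat \<Rightarrow> real. (\<forall>j<m. 0 \<le> lam j) \<and> (\<forall>i<d. x i = (\<Sum>j<m. lam j * cand j i)))"

definition l2_instance :: "nat \<Rightarrow> nat \<Rightarrow> nat \<Rightarrow> (nat \<Rightarrow> nat \<Rightarrow> real) \<Rightarrow> (nat \<Rightarrow> nat \<Rightarrow> real) \<Rightarrow> bool" where
  "l2_instance d n m vot cand \<longleftrightarrow>
     (\<forall>j<m. unit_nonneg d (cand j)) \<and>
     (\<forall>v<n. unit_nonneg d (vot v) \<and> in_cone d m cand (vot v))"

definition util :: "nat \<Rightarrow> (nat \<Rightarrow> nat \<Rightarrow> real) \<Rightarrow> (nat \<Rightarrow> nat \<Rightarrow> real) \<Rightarrow> nat \<Rightarrow> nat \<Rightarrow> real" where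
  "util d vot cand v c = ip d (vot v) (cand c)"

definition UW :: "nat \<Rightarrow> nat \<Rightarrow> (nat \<Rightarrow> nat \<Rightarrow> real) \<Rightarrow> (nat \<Rightarrow> nat \<Rightarrow> real) \<Rightarrow> nat \<Rightarrow> real" where
  "UW d n vot cand c = (\<Sum>v<n. util d vot cand v c)"

text \<open>A profile: pref v a b means voter v ranks candidate a strictly above candidate b.\<close>
definition consistent_profile ::
  "nat \<Rightarrow> nat \<Rightarrow> nat \<Rightarrow> (nat \<Rightarrow> nat \<Rightarrow> real) \<Rightarrow> (nat \<Rightarrow> nat \<Rightarrow> real) \<Rightarrow> (nat \<Rightarrow> nat \<Rightarrow> nat \<Rightarrow> bool) \<Rightarrow> bool" where
  "consistent_profile d n m vot cand pref \<longleftrightarrow>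
     (\<forall>v<n.
        (\<forall>a<m. \<not> pref v a a) \<and>
        (\<forall>a<m. \<forall>b<m. \<forall>c<m. pref v a b \<longrightarrow> pref v b c \<longrightarrow> pref v a c) \<and>
        (\<forall>a<m. \<forall>b<m. a \<noteq> b \<longrightarrow> pref v a b \<or> pref v b a) \<and>
        (\<forall>a<m. \<forall>b<m. util d vot cand v a > util d vot cand v b \<longrightarrow> pref v a b))"

definition S_set :: "nat \<Rightarrow> (nat \<Rightarrow> nat \<Rightarrow> nat \<Rightarrow> bool) \<Rightarrow> nat \<Rightarrow> nat set \<Rightarrow> nat set" where
  "S_set n pref c W = {v. v < n \<and> (\<forall>w\<in>W. pref v c w)}"

definition stable_lottery ::
  "nat \<Rightarrow> nat \<Rightarrow> (nat \<Rightarrow> nat \<Rightarrow> nat \<Rightarrow> bool) \<Rightarrow> nat \<Rightarrow> nat set pmf \<Rightarrow> bool" where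
  "stable_lottery n m pref k L \<longleftrightarrow>
     (\<forall>W\<in>set_pmf L. W \<subseteq> {..<m} \<and> card W = k) \<and>
     (\<forall>c<m. measure_pmf.expectation L (\<lambda>W. real (card (S_set n pref c W))) \<le> real n / real k)"

definition pslr_prob :: "nat \<Rightarrow> nat set pmf \<Rightarrow> nat \<Rightarrow> real" where
  "pslr_prob d L c = measure_pmf.prob L {W. c \<in> W} / (2 * real d)"

definition pslr_welfare ::
  "nat \<Rightarrow> nat \<Rightarrow> nat \<Rightarrow> (nat \<Rightarrow> nat \<Rightarrow> real) \<Rightarrow> (nat \<Rightarrow> nat \<Rightarrow> real) \<Rightarrow> nat set pmf \<Rightarrow> real" where
  "pslr_welfare d n m vot cand L = (\<Sum>c<m. pslr_prob d L c * UW d n vot cand c)"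

end

theory Submission
  imports Defs
begin

text \<open>A voter outside S_c(W) ranks some member of W at least as high as c
  and hence gets at least as much utility from it, while a voter inside S_c(W) gets utility at
  most 1 from c. So UW(c) is at most the total welfare of the committee W plus |S_c(W)|.
  Averaging over the stable lottery gives UW(c) \<le> 2d \<cdot> E[UW] + n/(2d).
  Conversely, the optimal welfare M is at least n/d: for the sum s of all voters,
  UW(c) = \<langle>c, s\<rangle>, and writing each voter as a nonnegative combination of candidates
  (whose l1-norms are at least 1) gives |s|_2^2 \<le> M |s|_1; Cauchy-Schwarz |s|_1^2 \<le> d |s|_2^2
  and |s|_1 \<ge> n then give n \<le> d M. Applying the first bound to an optimal c,
  M \<le> 2d \<cdot> E[UW] + M/2, i.e. M \<le> 4d \<cdot> E[UW].\<close>

lemma ip_nonneg: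
  assumes "unit_nonneg d x" "unit_nonneg d y"
  shows "0 \<le> ip d x y"
  using assms unfolding ip_def unit_nonneg_def by (auto intro!: sum_nonneg)

lemma ip_le_one:
  assumes "unit_nonneg d x" "unit_nonneg d y"
  shows "ip d x y \<le> 1"
proof -
  have "ip d x y \<le> (\<Sum>i<d. ((x i)\<^sup>2 + (y i)\<^sup>2) / 2)"
    unfolding ip_def
  proof (rule sum_mono)
    fix i
    show "x i * y i \<le> ((x i)\<^sup>2 + (y i)\<^sup>2) / 2"
      using sum_squares_ge_zero[of "x i - y i" 0] by (simp add: power2_eq_square algebra_simps)
  qed
  also have "\<dots> = ((\<Sum>i<d. (x i)\<^sup>2) + (\<Sum>i<d. (y i)\<^sup>2)) / 2"
    by (simp add: sum.distrib flip: sum_divide_distrib)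
  also have "\<dots> = 1"
    using assms unfolding unit_nonneg_def by simp
  finally show ?thesis .
qed

lemma unit_nonneg_sum_ge_one:
  assumes "unit_nonneg d x"
  shows "1 \<le> (\<Sum>i<d. x i)"
proof -
  have "(x i)\<^sup>2 \<le> x i" if i: "i < d" for i
  proof -
    have "(x i)\<^sup>2 \<le> (\<Sum>j<d. (x j)\<^sup>2)"
      by (rule member_le_sum) (use i in auto)
    with assms have "(x i)\<^sup>2 \<le> 1"
      unfolding unit_nonneg_def by simp
    moreover have "0 \<le> x i"
      using assms i unfolding unit_nonneg_def by simp
    ultimately have "x i \<le> 1"
      by (metis abs_of_nonneg abs_square_le_1)
    with \<open>0 \<le> x i\<close> show ?thesis
      by (simp add: power2_eq_square mult_left_le)
  qed
  then have "(\<Sum>i<d. (x i)\<^sup>2) \<le> (\<Sum>i<d. x i)"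
    by (intro sum_mono) auto
  with assms show ?thesis
    unfolding unit_nonneg_def by simp
qed

lemma util_nonneg:
  assumes "l2_instance d n m vot cand" "v < n" "c < m"
  shows "0 \<le> util d vot cand v c"
  using assms ip_nonneg unfolding l2_instance_def util_def by blast

lemma util_le_one:
  assumes "l2_instance d n m vot cand" "v < n" "c < m"
  shows "util d vot cand v c \<le> 1"
  using assms ip_le_one unfolding l2_instance_def util_def by blast

lemma UW_nonneg:
  assumes "l2_instance d n m vot cand" "c < m"
  shows "0 \<le> UW d n vot cand c"
  unfolding UW_def using assms util_nonneg by (intro sum_nonneg) auto

lemma util_le_of_not_pref:
  assumes "consistent_profile d n m vot cand pref" "v < n" "a < m" "b < m"
    and "\<not> pref v a b"
  shows "util d vot cand v a \<le> util d vot cand v b"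
  using assms unfolding consistent_profile_def by (meson not_le)

lemma ip_in_cone_le:
  assumes "in_cone d m cand x" "\<And>j. j < m \<Longrightarrow> unit_nonneg d (cand j)"
    and "\<And>j. j < m \<Longrightarrow> ip d (cand j) y \<le> M" "0 \<le> M"
  shows "ip d x y \<le> M * (\<Sum>i<d. x i)"
proof -
  obtain lam where lam_nonneg: "\<And>j. j < m \<Longrightarrow> 0 \<le> lam j"
    and x_eq: "\<And>i. i < d \<Longrightarrow> x i = (\<Sum>j<m. lam j * cand j i)"
    using assms(1) unfolding in_cone_def by blast
  have "ip d x y = (\<Sum>j<m. lam j * ip d (cand j) y)"
    unfolding ip_def using x_eq
    by (simp add: sum_distrib_left sum_distrib_right sum.swap[of _ "{..<d}"] mult.assoc)
  also have "\<dots> \<le> (\<Sum>j<m. lam j * (\<Sum>i<d. cand j i) * M)"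
  proof (rule sum_mono)
    fix j assume "j \<in> {..<m}"
    then have "ip d (cand j) y \<le> M" "1 \<le> (\<Sum>i<d. cand j i)" "0 \<le> lam j"
      using assms lam_nonneg unit_nonneg_sum_ge_one by auto
    then have "ip d (cand j) y \<le> (\<Sum>i<d. cand j i) * M"
      using \<open>0 \<le> M\<close> mult_right_mono[of 1 "\<Sum>i<d. cand j i" M] by simp
    then show "lam j * ip d (cand j) y \<le> lam j * (\<Sum>i<d. cand j i) * M"
      using \<open>0 \<le> lam j\<close> by (simp add: mult.assoc mult_left_mono)
  qed
  also have "\<dots> = M * (\<Sum>i<d. x i)"
    using x_eq by (simp add: sum_distrib_left sum_distrib_right sum.swap[of _ "{..<d}"] mult_ac)
  finally show ?thesis .
qed

lemma sum_le_dim_mult_of_sum_squares_le: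
  fixes s :: "nat \<Rightarrow> real"
  assumes "(\<Sum>i<d. (s i)\<^sup>2) \<le> M * (\<Sum>i<d. s i)" "0 \<le> M"
  shows "(\<Sum>i<d. s i) \<le> real d * M"
proof -
  let ?T = "\<Sum>i<d. s i"
  have "?T\<^sup>2 \<le> (\<Sum>i<d. (s i)\<^sup>2) * real d"
    using sum_squared_le_sum_of_squares[of s "{..<d}"] by simp
  also have "\<dots> \<le> M * ?T * real d"
    using assms(1) by (intro mult_right_mono) auto
  finally have "?T * ?T \<le> (real d * M) * ?T"
    by (simp add: power2_eq_square mult_ac)
  then show ?thesis
    using assms(2) by (cases "?T > 0") (auto intro: order_trans[of _ 0])
qed

lemma optimal_welfare_lower_bound:
  assumes inst: "l2_instance d n m vot cand"
    and UW_le: "\<And>c. c < m \<Longrightarrow> UW d n vot cand c \<le> M" and "0 \<le> M"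
  shows "real n \<le> real d * M"
proof -
  define s where "s i = (\<Sum>v<n. vot v i)" for i
  have UW_eq: "UW d n vot cand c = ip d (cand c) s" for c
    unfolding UW_def util_def ip_def s_def
    by (simp add: sum.swap[of _ "{..<d}"] sum_distrib_left mult.commute)
  have "(\<Sum>i<d. (s i)\<^sup>2) = (\<Sum>v<n. ip d (vot v) s)"
    unfolding s_def ip_def by (simp add: power2_eq_square sum_distrib_right sum.swap[of _ "{..<d}"])
  also have "\<dots> \<le> (\<Sum>v<n. M * (\<Sum>i<d. vot v i))"
    using inst UW_le \<open>0 \<le> M\<close> unfolding l2_instance_def UW_eq
    by (intro sum_mono ip_in_cone_le) auto
  also have "\<dots> = M * (\<Sum>i<d. s i)"
    unfolding s_def by (simp add: sum_distrib_left sum.swap[of _ "{..<d}"])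
  finally have "(\<Sum>i<d. s i) \<le> real d * M"
    using \<open>0 \<le> M\<close> by (rule sum_le_dim_mult_of_sum_squares_le)
  moreover have "real n \<le> (\<Sum>i<d. s i)"
  proof -
    have "real n = (\<Sum>v<n. 1)"
      by simp
    also have "\<dots> \<le> (\<Sum>v<n. \<Sum>i<d. vot v i)"
      using inst unit_nonneg_sum_ge_one unfolding l2_instance_def by (intro sum_mono) auto
    finally show ?thesis
      unfolding s_def by (simp add: sum.swap[of _ "{..<d}"])
  qed
  ultimately show ?thesis by linarith
qed

lemma UW_le_committee_welfare_plus_card_S:
  assumes inst: "l2_instance d n m vot cand"
    and prof: "consistent_profile d n m vot cand pref"
    and W: "W \<subseteq> {..<m}" and c: "c < m"
  shows "UW d n vot cand c \<le> (\<Sum>w\<in>W. UW d n vot cand w) + real (card (S_set n pref c W))"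
proof -
  let ?S = "S_set n pref c W"
  let ?u = "util d vot cand"
  have "finite W"
    using W finite_subset by blast
  have per_voter: "?u v c \<le> (\<Sum>w\<in>W. ?u v w) + of_bool (v \<in> ?S)" if v: "v < n" for v
  proof (cases "v \<in> ?S")
    case True
    have "0 \<le> (\<Sum>w\<in>W. ?u v w)"
      using W util_nonneg[OF inst v] by (intro sum_nonneg) auto
    then show ?thesis
      using True util_le_one[OF inst v c] by simp
  next
    case False
    then obtain w where w: "w \<in> W" "\<not> pref v c w"
      using v unfolding S_set_def by auto
    have "?u v c \<le> ?u v w"
      using util_le_of_not_pref[OF prof v c _ w(2)] w(1) W by auto
    also have "\<dots> \<le> (\<Sum>w\<in>W. ?u v w)"
      using \<open>finite W\<close> w(1) W util_nonneg[OF inst v] by (intro member_le_sum) auto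
    finally show ?thesis
      using False by simp
  qed
  have "?S \<subseteq> {..<n}"
    unfolding S_set_def by auto
  have "UW d n vot cand c \<le> (\<Sum>v<n. (\<Sum>w\<in>W. ?u v w) + of_bool (v \<in> ?S))"
    unfolding UW_def using per_voter by (intro sum_mono) auto
  also have "\<dots> = (\<Sum>w\<in>W. UW d n vot cand w) + real (card ?S)"
    using \<open>?S \<subseteq> {..<n}\<close>
    by (simp add: UW_def sum.distrib sum.swap[of _ W] sum.inter_restrict[symmetric] Int_absorb1)
  finally show ?thesis .
qed

lemma integrable_pmf_of_finite_subsets:
  fixes g :: "'a set \<Rightarrow> real"
  assumes "finite A" "\<And>W. W \<in> set_pmf L \<Longrightarrow> W \<subseteq> A"
  shows "integrable (measure_pmf L) g"
proof (rule integrable_measure_pmf_finite)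
  have "set_pmf L \<subseteq> Pow A"
    using assms(2) by blast
  then show "finite (set_pmf L)"
    using \<open>finite A\<close> by (simp add: finite_subset)
qed

lemma expectation_sum_over_random_subset:
  fixes f :: "'a \<Rightarrow> real"
  assumes "finite A" "\<And>W. W \<in> set_pmf L \<Longrightarrow> W \<subseteq> A"
  shows "measure_pmf.expectation L (\<lambda>W. \<Sum>w\<in>W. f w) = (\<Sum>a\<in>A. measure_pmf.prob L {W. a \<in> W} * f a)"
proof -
  note integrable = integrable_pmf_of_finite_subsets[OF assms]
  have sum_as_indicators: "(\<Sum>w\<in>W. f w) = (\<Sum>a\<in>A. indicator {W. a \<in> W} W * f a)"
    if "W \<subseteq> A" for W
    using \<open>finite A\<close> that by (simp add: indicator_def Int_absorb1)
  have "measure_pmf.expectation L (\<lambda>W. \<Sum>w\<in>W. f w)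
      = measure_pmf.expectation L (\<lambda>W. \<Sum>a\<in>A. indicator {W. a \<in> W} W * f a)"
    by (rule integral_cong_AE) (simp_all add: AE_pmfI assms(2) sum_as_indicators)
  also have "\<dots> = (\<Sum>a\<in>A. measure_pmf.expectation L (\<lambda>W. indicator {W. a \<in> W} W * f a))"
    by (rule Bochner_Integration.integral_sum) (rule integrable)
  also have "\<dots> = (\<Sum>a\<in>A. measure_pmf.prob L {W. a \<in> W} * f a)"
    by simp
  finally show ?thesis .
qed

lemma UW_le_pslr_welfare_plus_n_over_2d:
  assumes inst: "l2_instance d n m vot cand"
    and prof: "consistent_profile d n m vot cand pref"
    and stable: "stable_lottery n m pref (2 * d) L" and "d \<ge> 1" and c: "c < m"
  shows "UW d n vot cand c \<le> 2 * real d * pslr_welfare d n m vot cand L + real n / (2 * real d)"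
proof -
  have committees: "\<And>W. W \<in> set_pmf L \<Longrightarrow> W \<subseteq> {..<m}"
    using stable unfolding stable_lottery_def by auto
  note integrable = integrable_pmf_of_finite_subsets[OF finite_lessThan committees]
  have "UW d n vot cand c = measure_pmf.expectation L (\<lambda>_. UW d n vot cand c)"
    by simp
  also have "\<dots>
      \<le> measure_pmf.expectation L (\<lambda>W. (\<Sum>w\<in>W. UW d n vot cand w) + real (card (S_set n pref c W)))"
    by (intro integral_mono_AE integrable AE_pmfI UW_le_committee_welfare_plus_card_S[OF inst prof committees c])
  also have "\<dots> = measure_pmf.expectation L (\<lambda>W. \<Sum>w\<in>W. UW d n vot cand w)
      + measure_pmf.expectation L (\<lambda>W. real (card (S_set n pref c W)))"
    by (rule Bochner_Integration.integral_add[OF integrable integrable])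
  also have "measure_pmf.expectation L (\<lambda>W. \<Sum>w\<in>W. UW d n vot cand w)
      = 2 * real d * pslr_welfare d n m vot cand L"
    using \<open>d \<ge> 1\<close>
    by (simp add: expectation_sum_over_random_subset[OF _ committees] pslr_welfare_def pslr_prob_def
        sum_distrib_left)
  also have "measure_pmf.expectation L (\<lambda>W. real (card (S_set n pref c W))) \<le> real n / (2 * real d)"
    using stable c unfolding stable_lottery_def by simp
  finally show ?thesis by simp
qed

theorem theorem18:
  shows "\<exists>K::real. K > 0 \<and>
    (\<forall>d n m vot cand pref L.
       d \<ge> 1 \<longrightarrow>
       l2_instance d n m vot cand \<longrightarrow>
       consistent_profile d n m vot cand pref \<longrightarrow>
       stable_lottery n m pref (2 * d) L \<longrightarrow>
       (\<forall>c<m. UW d n vot cand c \<le> K * real d * pslr_welfare d n m vot cand L))"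
proof (intro exI[of _ 4] conjI allI impI)
  fix d n m vot cand pref L c
  assume "d \<ge> 1" and inst: "l2_instance d n m vot cand"
    and prof: "consistent_profile d n m vot cand pref"
    and stable: "stable_lottery n m pref (2 * d) L" and "c < m"
  define M where "M = Max (UW d n vot cand ` {..<m})"
  have "M \<in> UW d n vot cand ` {..<m}"
    unfolding M_def using \<open>c < m\<close> by (intro Max_in) auto
  then obtain c_opt where "c_opt < m" "UW d n vot cand c_opt = M"
    by auto
  have UW_le_M: "UW d n vot cand c' \<le> M" if "c' < m" for c'
    unfolding M_def using that by (intro Max_ge) auto
  have "0 \<le> M"
    using UW_nonneg[OF inst \<open>c_opt < m\<close>] \<open>UW d n vot cand c_opt = M\<close> by simp
  have "real n / (2 * real d) \<le> M / 2"
    using optimal_welfare_lower_bound[OF inst UW_le_M \<open>0 \<le> M\<close>] \<open>d \<ge> 1\<close> by (simp add: field_simps)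
  then have "M \<le> 4 * real d * pslr_welfare d n m vot cand L"
    using UW_le_pslr_welfare_plus_n_over_2d[OF inst prof stable \<open>d \<ge> 1\<close> \<open>c_opt < m\<close>]
      \<open>UW d n vot cand c_opt = M\<close> by linarith
  then show "UW d n vot cand c \<le> 4 * real d * pslr_welfare d n m vot cand L"
    using UW_le_M[OF \<open>c < m\<close>] by linarith
qed simp

end
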